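(* Let $S=\{x_i\mid i\in\mathbb{Z}\}\subset\mathbb{R}$ with $x_i<x_{i+1}$ for all $i\in\mathbb{Z}$, and assume $S$ has no accumulation point in $\mathbb{R}$. Let $\alpha\ge1$ and define $\varphi(x)=|x-x_i|^\alpha$ for $x\in\big[\frac{x_i+x_{i-1}}{2},\frac{x_i+x_{i+1}}{2}\big]$, $i\in\mathbb{Z}$, and $\mu:=\varphi\,dx$. Then the closure $(\mathcal{E},D(\mathcal{E}))$ on $L^2(\mathbb{R},\mu)$ of the form $$\mathcal{E}(f,g)=\frac12\int_{\mathbb{R}}f'(x)g'(x)\,\mu(dx),\qquad f,g\in C_0^\infty(\mathbb{R}),$$ is recurrent.
   Context: The form above is closable on $L^2(\mathbb{R},\mu)$ (since $1/\varphi\in L^1_{loc}(\mathbb{R}\setminus S,dx)$ and $S$ is Lebesgue-null). A closed symmetric form $(\mathcal{E},D(\mathcal{E}))$ on $L^2(\mathbb{R},\mu)$ is called recurrent if there exists a sequence $(u_n)_{n\in\mathbb{N}}\subset D(\mathcal{E})$ with $0\le u_n\le 1$, $u_n\nearrow 1$ $dx$-a.e. as $n\to\infty$, and $\lim_{n\to\infty}\mathcal{E}(u_n,u_n)=0$. *)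

theory Defs
  imports "HOL-Analysis.Analysis"
begin

text \<open>The weight: for x in [(x_{i-1}+x_i)/2, (x_i+x_{i+1})/2], phi x = |x - x_i| powr alpha.
  (At the common endpoints both choices of i give the same value.)\<close>
definition weight :: "(int \<Rightarrow> real) \<Rightarrow> real \<Rightarrow> real \<Rightarrow> real" where
  "weight xs \<alpha> t =
     \<bar>t - xs (SOME i. (xs (i - 1) + xs i) / 2 \<le> t \<and> t \<le> (xs i + xs (i + 1)) / 2)\<bar> powr \<alpha>"

definition wmeasure :: "(int \<Rightarrow> real) \<Rightarrow> real \<Rightarrow> real measure" where
  "wmeasure xs \<alpha> = density lborel (\<lambda>t. ennreal (weight xs \<alpha> t))"

definition test_fun :: "(real \<Rightarrow> real) \<Rightarrow> bool" where
  "test_fun f \<longleftrightarrow> (\<forall>k x. ((deriv ^^ k) f) differentiable (at x))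
                    \<and> compact (closure {x. f x \<noteq> 0})"

definition preform :: "real measure \<Rightarrow> (real \<Rightarrow> real) \<Rightarrow> (real \<Rightarrow> real) \<Rightarrow> real" where
  "preform M f g = (1/2) * (\<integral>x. deriv f x * deriv g x \<partial>M)"

text \<open>Closure of the (closable) form: f lies in D(E) with E(f,f) = e iff there is a sequence of
  test functions converging to f in L^2(M), which is E-Cauchy, and whose energies converge to e.
  (By closability, e is uniquely determined by f.)\<close>
definition closure_energy :: "real measure \<Rightarrow> (real \<Rightarrow> real) \<Rightarrow> real \<Rightarrow> bool" where
  "closure_energy M f e \<longleftrightarrow> f \<in> borel_measurable M \<and>
     (\<exists>fs :: nat \<Rightarrow> real \<Rightarrow> real.
        (\<forall>n. test_fun (fs n)) \<and>
        ((\<lambda>n. \<integral>\<^sup>+ x. ennreal ((fs n x - f x)\<^sup>2) \<partial>M) \<longlonglongrightarrow> 0) \<and>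
        (\<forall>\<epsilon>>0. \<exists>N. \<forall>n\<ge>N. \<forall>m\<ge>N.
            preform M (\<lambda>x. fs n x - fs m x) (\<lambda>x. fs n x - fs m x) < \<epsilon>) \<and>
        ((\<lambda>n. preform M (fs n) (fs n)) \<longlonglongrightarrow> e))"

definition recurrent_closure :: "real measure \<Rightarrow> bool" where
  "recurrent_closure M \<longleftrightarrow>
     (\<exists>(u :: nat \<Rightarrow> real \<Rightarrow> real) (e :: nat \<Rightarrow> real).
        (\<forall>n. closure_energy M (u n) (e n)) \<and>
        (\<forall>n. AE x in lborel. 0 \<le> u n x \<and> u n x \<le> 1) \<and>
        (AE x in lborel. incseq (\<lambda>n. u n x) \<and> (\<lambda>n. u n x) \<longlonglongrightarrow> 1) \<and>
        e \<longlonglongrightarrow> 0)"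

end

theory Submission
  imports Defs "HOL-Computational_Algebra.Polynomial"
begin

text \<open>
  Every test function lies in the domain of the closure with its pre-form energy, so it suffices
  to find test functions \<open>0 \<le> u\<^sub>n \<le> 1\<close> increasing to \<open>1\<close> with energies tending to \<open>0\<close>.
  Let \<open>u\<^sub>n\<close> be the average of \<open>n + 1\<close> smooth cutoffs, the \<open>j\<close>-th of which falls from \<open>1\<close> to \<open>0\<close>
  on \<open>[x\<^sub>j, x\<^sub>j + d\<^sub>j]\<close> with \<open>d\<^sub>j = min 1 (x\<^sub>j\<^sub>+\<^sub>1 - x\<^sub>j)\<close> (and symmetrically on the left).
  Since \<open>\<alpha> \<ge> 1\<close>, on that interval \<open>\<phi>(x) \<le> \<bar>x - x\<^sub>j\<bar> \<le> d\<^sub>j\<close>, so each cutoff has weighted energy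
  at most \<open>B\<^sup>2\<close>, where \<open>B\<close> bounds the slope of the profile, whatever the size of \<open>d\<^sub>j\<close>.
  The cutoffs have disjoint transition intervals, hence their average has energy \<open>O(1/n)\<close>.
\<close>

section \<open>Finitely differentiable functions\<close>

definition smooth_upto :: "nat \<Rightarrow> (real \<Rightarrow> real) \<Rightarrow> bool" where
  "smooth_upto n f \<longleftrightarrow> (\<forall>j\<le>n. \<forall>x. (deriv ^^ j) f differentiable (at x))"

lemma smooth_upto_0: "smooth_upto 0 f \<longleftrightarrow> (\<forall>x. f differentiable (at x))"
  by (simp add: smooth_upto_def)

lemma smooth_upto_Suc:
  "smooth_upto (Suc n) f \<longleftrightarrow> (\<forall>x. f differentiable (at x)) \<and> smooth_upto n (deriv f)"
proof -
  have "smooth_upto (Suc n) f \<longleftrightarrow>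
      (\<forall>x. f differentiable (at x)) \<and> (\<forall>j\<le>n. \<forall>x. (deriv ^^ Suc j) f differentiable (at x))"
    unfolding smooth_upto_def by (metis Suc_le_mono funpow_0 not0_implies_Suc zero_le)
  then show ?thesis
    by (simp add: smooth_upto_def funpow_Suc_right del: funpow.simps)
qed

lemma smooth_upto_mono: "m \<le> n \<Longrightarrow> smooth_upto n f \<Longrightarrow> smooth_upto m f"
  by (simp add: smooth_upto_def)

lemma smooth_upto_differentiable: "smooth_upto n f \<Longrightarrow> f differentiable (at x)"
  by (cases n) (auto simp: smooth_upto_0 smooth_upto_Suc)

lemma smooth_upto_has_real_derivative:
  "smooth_upto n f \<Longrightarrow> (f has_real_derivative deriv f x) (at x)"
  using smooth_upto_differentiable DERIV_deriv_iff_real_differentiable by blast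

lemma smooth_upto_continuous_on: "smooth_upto n f \<Longrightarrow> continuous_on S f"
  by (intro continuous_at_imp_continuous_on ballI differentiable_imp_continuous_within
      smooth_upto_differentiable)

lemma borel_measurable_deriv_smooth_upto:
  "smooth_upto (Suc n) f \<Longrightarrow> deriv f \<in> borel_measurable borel"
  by (intro borel_measurable_continuous_onI smooth_upto_continuous_on[of n]) (simp add: smooth_upto_Suc)

lemma smooth_upto_const: "smooth_upto n (\<lambda>x. c)"
  by (induction n arbitrary: c) (simp_all add: smooth_upto_0 smooth_upto_Suc)

lemma smooth_upto_add:
  "smooth_upto n f \<Longrightarrow> smooth_upto n g \<Longrightarrow> smooth_upto n (\<lambda>x. f x + g x)"
proof (induction n arbitrary: f g)
  case (Suc n)
  have "deriv (\<lambda>x. f x + g x) = (\<lambda>x. deriv f x + deriv g x)"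
    by (intro ext DERIV_imp_deriv derivative_intros
        smooth_upto_has_real_derivative[OF Suc.prems(1)] smooth_upto_has_real_derivative[OF Suc.prems(2)])
  with Suc show ?case by (auto simp: smooth_upto_Suc)
qed (auto simp: smooth_upto_0)

lemma smooth_upto_mult:
  "smooth_upto n f \<Longrightarrow> smooth_upto n g \<Longrightarrow> smooth_upto n (\<lambda>x. f x * g x)"
proof (induction n arbitrary: f g)
  case (Suc n)
  have "deriv (\<lambda>x. f x * g x) = (\<lambda>x. deriv f x * g x + f x * deriv g x)"
    using smooth_upto_has_real_derivative[OF Suc.prems(1)] smooth_upto_has_real_derivative[OF Suc.prems(2)]
    by (intro ext DERIV_imp_deriv) (auto intro!: derivative_eq_intros)
  moreover have "smooth_upto n (\<lambda>x. deriv f x * g x + f x * deriv g x)"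
    using Suc.prems smooth_upto_mono[of n "Suc n"]
    by (intro smooth_upto_add Suc.IH) (auto simp: smooth_upto_Suc)
  ultimately show ?case using Suc.prems by (simp add: smooth_upto_Suc smooth_upto_differentiable)
qed (auto simp: smooth_upto_0)

lemma smooth_upto_diff:
  "smooth_upto n f \<Longrightarrow> smooth_upto n g \<Longrightarrow> smooth_upto n (\<lambda>x. f x - g x)"
  using smooth_upto_add[OF _ smooth_upto_mult[OF smooth_upto_const[of n "-1"]], of f g] by simp

lemma has_real_derivative_compose_affine:
  "(f has_real_derivative D) (at (a * x + b)) \<Longrightarrow>
    ((\<lambda>x. f (a * x + b)) has_real_derivative a * D) (at x)"
proof -
  assume "(f has_real_derivative D) (at (a * x + b))"
  moreover have "((\<lambda>x. a * x + b) has_real_derivative a) (at x)"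
    by (auto intro!: derivative_eq_intros)
  ultimately show ?thesis by (metis DERIV_chain2 mult.commute)
qed

lemma smooth_upto_compose_affine: "smooth_upto n f \<Longrightarrow> smooth_upto n (\<lambda>x. f (a * x + b))"
proof (induction n arbitrary: f)
  case 0
  then show ?case
    by (auto simp: smooth_upto_0 real_differentiable_def
        intro!: has_real_derivative_compose_affine smooth_upto_has_real_derivative)
next
  case (Suc n)
  have "deriv (\<lambda>x. f (a * x + b)) = (\<lambda>x. a * deriv f (a * x + b))"
    by (intro ext DERIV_imp_deriv has_real_derivative_compose_affine
        smooth_upto_has_real_derivative[OF Suc.prems])
  moreover have "smooth_upto n (\<lambda>x. a * deriv f (a * x + b))"
    using Suc by (intro smooth_upto_mult smooth_upto_const Suc.IH) (simp add: smooth_upto_Suc)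
  ultimately show ?case using Suc.prems
    by (auto simp: smooth_upto_Suc real_differentiable_def
        intro!: has_real_derivative_compose_affine smooth_upto_has_real_derivative)
qed

lemma smooth_upto_inverse:
  "smooth_upto n g \<Longrightarrow> (\<And>x. g x \<noteq> 0) \<Longrightarrow> smooth_upto n (\<lambda>x. 1 / g x)"
proof (induction n arbitrary: g)
  case 0
  then show ?case by (auto simp: smooth_upto_0 intro!: derivative_intros)
next
  case (Suc n)
  have "deriv (\<lambda>x. 1 / g x) = (\<lambda>x. - deriv g x * ((1 / g x) * (1 / g x)))"
    using Suc.prems
    by (intro ext DERIV_imp_deriv)
       (auto intro!: derivative_eq_intros smooth_upto_has_real_derivative simp: power2_eq_square)
  moreover have "smooth_upto n (\<lambda>x. - deriv g x * ((1 / g x) * (1 / g x)))"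
  proof -
    have "smooth_upto n (\<lambda>x. 1 / g x)"
      using Suc.prems smooth_upto_mono[of n "Suc n"] by (intro Suc.IH) auto
    moreover have "smooth_upto n (\<lambda>x. - deriv g x)"
      using Suc.prems smooth_upto_diff[OF smooth_upto_const[of n 0], of "deriv g"]
      by (simp add: smooth_upto_Suc)
    ultimately show ?thesis by (intro smooth_upto_mult)
  qed
  ultimately show ?case using Suc.prems by (auto simp: smooth_upto_Suc intro!: derivative_intros)
qed

lemma smooth_upto_sum:
  "(\<And>i. i \<in> I \<Longrightarrow> smooth_upto n (f i)) \<Longrightarrow> smooth_upto n (\<lambda>x. \<Sum>i\<in>I. f i x)"
  by (induction I rule: infinite_finite_induct) (auto intro: smooth_upto_add smooth_upto_const)

lemma test_funI:
  assumes "\<And>n. smooth_upto n f" and "bounded {x. f x \<noteq> 0}"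
  shows "test_fun f"
  using assms by (auto simp: test_fun_def smooth_upto_def compact_closure)

section \<open>A smooth step\<close>

definition flat_exp :: "real \<Rightarrow> real" where
  "flat_exp t = (if t > 0 then exp (- (1 / t)) else 0)"

definition flat_exp_poly :: "real poly \<Rightarrow> real \<Rightarrow> real" where
  "flat_exp_poly P t = (if t > 0 then poly P (1 / t) * exp (- (1 / t)) else 0)"

text \<open>The derivative of \<open>P(1/t) e\<^sup>-\<^sup>1\<^sup>/\<^sup>t\<close> is \<open>t\<^sup>-\<^sup>2 (P - P')(1/t) e\<^sup>-\<^sup>1\<^sup>/\<^sup>t\<close>.\<close>
definition flat_exp_deriv_poly :: "real poly \<Rightarrow> real poly" where
  "flat_exp_deriv_poly P = [:0, 0, 1:] * (P - pderiv P)"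

lemma tendsto_poly_times_exp_neg: "((\<lambda>z::real. poly P z * z * exp (- z)) \<longlongrightarrow> 0) at_top"
proof -
  have "poly P z * z * exp (- z) = (\<Sum>i\<le>degree P. coeff P i * (z ^ Suc i / exp z))" for z
    by (simp add: poly_altdef sum_distrib_right exp_minus divide_inverse sum_distrib_left algebra_simps)
  then show ?thesis
    by (simp only:) (intro tendsto_null_sum tendsto_mult_right_zero tendsto_power_div_exp_0)
qed

lemma flat_exp_poly_has_real_derivative:
  "(flat_exp_poly P has_real_derivative flat_exp_poly (flat_exp_deriv_poly P) t) (at t)"
proof -
  consider "t > 0" | "t < 0" | "t = 0" by linarith
  then show ?thesis
  proof cases
    case 1
    have "((\<lambda>t. poly P (1 / t) * exp (- (1 / t))) has_real_derivative
        poly (pderiv P) (1 / t) * (- (1 / t\<^sup>2)) * exp (- (1 / t)) + poly P (1 / t) * (exp (- (1 / t)) * (1 / t\<^sup>2))) (at t)"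
      using 1 by (auto intro!: derivative_eq_intros DERIV_chain2[OF poly_DERIV] simp: power2_eq_square field_simps)
    also have "poly (pderiv P) (1 / t) * (- (1 / t\<^sup>2)) * exp (- (1 / t)) + poly P (1 / t) * (exp (- (1 / t)) * (1 / t\<^sup>2))
        = flat_exp_poly (flat_exp_deriv_poly P) t"
      using 1 by (simp add: flat_exp_poly_def flat_exp_deriv_poly_def algebra_simps power2_eq_square)
    finally show ?thesis
      by (rule has_field_derivative_transform_within_open[of _ _ _ "{0<..}"])
         (use 1 in \<open>auto simp: flat_exp_poly_def\<close>)
  next
    case 2
    then show ?thesis
      using has_field_derivative_transform_within_open[OF DERIV_const[of 0 "at t"], of "{..<0}" "flat_exp_poly P"]
      by (auto simp: flat_exp_poly_def)
  next
    case 3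
    have "((\<lambda>y. poly P (inverse y) * inverse y * exp (- inverse y)) \<longlongrightarrow> 0) (at_right 0)"
      using filterlim_compose[OF tendsto_poly_times_exp_neg filterlim_inverse_at_top_right]
      by (simp add: o_def)
    then have "((\<lambda>y. flat_exp_poly P y / y) \<longlongrightarrow> 0) (at_right 0)"
      by (rule Lim_transform_eventually)
         (auto simp: eventually_at_right_field flat_exp_poly_def field_simps intro!: exI[of _ 1])
    moreover have "((\<lambda>y. flat_exp_poly P y / y) \<longlongrightarrow> 0) (at_left 0)"
      by (rule Lim_transform_eventually[OF tendsto_const])
         (auto simp: eventually_at_left_field flat_exp_poly_def intro!: exI[of _ "-1"])
    ultimately have "((\<lambda>y. (flat_exp_poly P y - flat_exp_poly P 0) / (y - 0)) \<longlongrightarrow> 0) (at 0)"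
      by (simp add: filterlim_at_split flat_exp_poly_def)
    then show ?thesis using 3 by (simp add: has_field_derivative_iff flat_exp_poly_def)
  qed
qed

lemma smooth_upto_flat_exp: "smooth_upto n flat_exp"
proof -
  have "\<exists>P. (deriv ^^ k) flat_exp = flat_exp_poly P" for k
  proof (induction k)
    case 0
    have "flat_exp = flat_exp_poly [:1:]" by (rule ext) (simp add: flat_exp_def flat_exp_poly_def)
    then show ?case by auto
  next
    case (Suc k)
    then obtain P where "(deriv ^^ k) flat_exp = flat_exp_poly P" by auto
    then have "(deriv ^^ Suc k) flat_exp = flat_exp_poly (flat_exp_deriv_poly P)"
      by (auto intro!: DERIV_imp_deriv flat_exp_poly_has_real_derivative)
    then show ?case by blast
  qed
  then show ?thesis
    unfolding smooth_upto_def real_differentiable_def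
    by (metis flat_exp_poly_has_real_derivative)
qed

definition smooth_step :: "real \<Rightarrow> real" where
  "smooth_step t = flat_exp t / (flat_exp t + flat_exp (1 - t))"

lemma flat_exp_sum_pos: "flat_exp t + flat_exp (1 - t) > 0"
  by (cases "t > 0") (auto simp: flat_exp_def add_pos_nonneg add_nonneg_pos)

lemma smooth_upto_smooth_step: "smooth_upto n smooth_step"
proof -
  have "smooth_upto n (\<lambda>t. flat_exp t * (1 / (flat_exp t + flat_exp (-1 * t + 1))))"
    using flat_exp_sum_pos
    by (intro smooth_upto_mult smooth_upto_inverse smooth_upto_add smooth_upto_flat_exp
        smooth_upto_compose_affine) (auto simp: less_le)
  then show ?thesis by (simp add: smooth_step_def[abs_def])
qed

lemma smooth_step_eq_0: "t \<le> 0 \<Longrightarrow> smooth_step t = 0"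
  by (simp add: smooth_step_def flat_exp_def)

lemma smooth_step_eq_1: "1 \<le> t \<Longrightarrow> smooth_step t = 1"
  using flat_exp_sum_pos[of t] by (simp add: smooth_step_def flat_exp_def)

lemma smooth_step_nonneg: "0 \<le> smooth_step t"
  using flat_exp_sum_pos[of t] by (simp add: smooth_step_def flat_exp_def)

lemma smooth_step_le_1: "smooth_step t \<le> 1"
  using flat_exp_sum_pos[of t] by (simp add: smooth_step_def flat_exp_def)

lemma deriv_smooth_step_eq_0: "t \<le> 0 \<or> 1 \<le> t \<Longrightarrow> deriv smooth_step t = 0"
  using smooth_upto_has_real_derivative[OF smooth_upto_smooth_step[of 0]]
  by (metis DERIV_local_max DERIV_local_min smooth_step_eq_0 smooth_step_eq_1
      smooth_step_le_1 smooth_step_nonneg zero_less_one)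

lemma bounded_deriv_smooth_step: "\<exists>B. \<forall>t. \<bar>deriv smooth_step t\<bar> \<le> B"
proof -
  have "continuous_on {0..1} (deriv smooth_step)"
    using smooth_upto_smooth_step[of 1]
    by (intro smooth_upto_continuous_on[of 0]) (simp add: smooth_upto_Suc)
  then obtain B where B: "\<forall>t\<in>{0..1}. \<bar>deriv smooth_step t\<bar> \<le> B"
    using compact_imp_bounded[OF compact_continuous_image] by (fastforce simp: bounded_iff)
  have "\<bar>deriv smooth_step t\<bar> \<le> \<bar>B\<bar>" for t
  proof (cases "t \<le> 0 \<or> 1 \<le> t")
    case False
    then have "t \<in> {0..1}" by auto
    with B show ?thesis by force
  qed (simp add: deriv_smooth_step_eq_0)
  then show ?thesis by blast
qed

section \<open>Averaged cutoffs along an increasing sequence\<close>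

definition cutoff :: "real \<Rightarrow> real \<Rightarrow> real \<Rightarrow> real" where
  "cutoff c d x = 1 - smooth_step ((x - c) / d)"

lemma cutoff_eq_1: "0 < d \<Longrightarrow> x \<le> c \<Longrightarrow> cutoff c d x = 1"
  by (simp add: cutoff_def smooth_step_eq_0 divide_nonpos_pos)

lemma cutoff_eq_0: "0 < d \<Longrightarrow> c + d \<le> x \<Longrightarrow> cutoff c d x = 0"
  by (simp add: cutoff_def smooth_step_eq_1 le_divide_eq)

lemma cutoff_nonneg: "0 \<le> cutoff c d x"
  by (simp add: cutoff_def smooth_step_le_1)

lemma cutoff_le_1: "cutoff c d x \<le> 1"
  by (simp add: cutoff_def smooth_step_nonneg)

lemma cutoff_affine_eq: "cutoff c d = (\<lambda>x. 1 - smooth_step ((1 / d) * x + (- c / d)))"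
  by (rule ext) (simp add: cutoff_def diff_divide_distrib)

lemma smooth_upto_cutoff: "smooth_upto n (cutoff c d)"
  unfolding cutoff_affine_eq
  by (intro smooth_upto_diff smooth_upto_const smooth_upto_compose_affine smooth_upto_smooth_step)

lemma deriv_cutoff: "deriv (cutoff c d) x = - (deriv smooth_step ((x - c) / d) / d)"
proof (rule DERIV_imp_deriv)
  have "((\<lambda>x. smooth_step ((1 / d) * x + (- c / d))) has_real_derivative
      (1 / d) * deriv smooth_step ((1 / d) * x + (- c / d))) (at x)"
    by (intro has_real_derivative_compose_affine
        smooth_upto_has_real_derivative[OF smooth_upto_smooth_step[of 0]])
  from DERIV_diff[OF DERIV_const[of 1] this]
  have "((\<lambda>x. 1 - smooth_step ((1 / d) * x + (- c / d))) has_real_derivative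
      - ((1 / d) * deriv smooth_step ((1 / d) * x + (- c / d)))) (at x)"
    by simp
  then show "(cutoff c d has_real_derivative - (deriv smooth_step ((x - c) / d) / d)) (at x)"
    by (simp add: cutoff_affine_eq diff_divide_distrib)
qed

lemma deriv_smooth_step_nonzero_between:
  assumes "0 < d" and "deriv smooth_step ((x - c) / d) \<noteq> 0"
  shows "c < x \<and> x < c + d"
proof (rule ccontr)
  assume "\<not> (c < x \<and> x < c + d)"
  with \<open>0 < d\<close> have "(x - c) / d \<le> 0 \<or> 1 \<le> (x - c) / d"
    by (auto simp: divide_nonpos_pos le_divide_eq)
  with assms(2) show False by (simp add: deriv_smooth_step_eq_0)
qed

lemma mono_window_average:
  fixes F :: "nat \<Rightarrow> real"
  assumes "mono F"
  shows "incseq (\<lambda>n. (\<Sum>j\<in>{n+1..2*n+1}. F j) / (real n + 1))"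
proof (rule incseq_SucI)
  fix n
  define T where "T = (\<Sum>j\<in>{n+2..2*n+2}. F j)"
  have "(\<Sum>j\<in>{n+1..2*n+1}. F j) \<le> (\<Sum>j\<in>{n+1..2*n+1}. F (Suc j))"
    using assms by (intro sum_mono) (simp add: monoD)
  also have "\<dots> = T"
    unfolding T_def using sum.shift_bounds_cl_Suc_ivl[of F "n+1" "2*n+1"] by simp
  finally have "(\<Sum>j\<in>{n+1..2*n+1}. F j) / (real n + 1) \<le> T / (real n + 1)"
    by (simp add: divide_right_mono)
  also have "\<dots> \<le> (T + F (2*n+3)) / (real n + 2)"
  proof -
    have "T \<le> of_nat (card {n+2..2*n+2}) * F (2*n+3)"
      unfolding T_def using assms by (intro sum_bounded_above) (simp add: monoD)
    then show ?thesis by (simp add: field_simps)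
  qed
  also have "T + F (2*n+3) = (\<Sum>j\<in>{Suc n+1..2*Suc n+1}. F j)"
  proof -
    have "{Suc n+1..2*Suc n+1} = insert (2*n+3) {n+2..2*n+2}" by auto
    then show ?thesis unfolding T_def by simp
  qed
  finally show "(\<Sum>j\<in>{n+1..2*n+1}. F j) / (real n + 1)
      \<le> (\<Sum>j\<in>{Suc n+1..2*Suc n+1}. F j) / (real (Suc n) + 1)"
    by (simp add: add.commute)
qed

lemma power2_sum_eq_sum_power2:
  fixes a :: "'a \<Rightarrow> 'b::comm_semiring_1"
  assumes "\<And>j k. j \<in> J \<Longrightarrow> k \<in> J \<Longrightarrow> j \<noteq> k \<Longrightarrow> a j * a k = 0"
  shows "(\<Sum>j\<in>J. a j)\<^sup>2 = (\<Sum>j\<in>J. (a j)\<^sup>2)"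
proof (cases "finite J")
  case True
  have "(\<Sum>j\<in>J. a j)\<^sup>2 = (\<Sum>j\<in>J. \<Sum>k\<in>J. a j * a k)"
    by (simp add: power2_eq_square sum_product)
  also have "\<dots> = (\<Sum>j\<in>J. (a j)\<^sup>2)"
  proof (rule sum.cong[OF refl])
    fix j assume "j \<in> J"
    with True have "(\<Sum>k\<in>J. a j * a k) = a j * a j + (\<Sum>k\<in>J - {j}. a j * a k)"
      by (rule sum.remove)
    also have "(\<Sum>k\<in>J - {j}. a j * a k) = 0"
      using assms \<open>j \<in> J\<close> by (intro sum.neutral) auto
    finally show "(\<Sum>k\<in>J. a j * a k) = (a j)\<^sup>2" by (simp add: power2_eq_square)
  qed
  finally show ?thesis .
qed simp

lemma nn_integral_sum_indicator_Icc:
  assumes "finite J" and "\<And>j. j \<in> J \<Longrightarrow> 0 \<le> c j" and "\<And>j. j \<in> J \<Longrightarrow> a j \<le> b j"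
  shows "(\<integral>\<^sup>+x. ennreal (\<Sum>j\<in>J. c j * indicator {a j..b j} x) \<partial>lborel)
    = ennreal (\<Sum>j\<in>J. c j * (b j - a j))"
proof -
  have "(\<integral>\<^sup>+x. ennreal (\<Sum>j\<in>J. c j * indicator {a j..b j} x) \<partial>lborel)
      = (\<integral>\<^sup>+x. (\<Sum>j\<in>J. ennreal (c j) * indicator {a j..b j} x) \<partial>lborel)"
    using assms(2)
    by (intro nn_integral_cong) (auto simp: sum_ennreal[symmetric] ennreal_mult' indicator_def intro!: sum.cong)
  also have "\<dots> = (\<Sum>j\<in>J. ennreal (c j) * emeasure lborel {a j..b j})"
    by (subst nn_integral_sum) (auto simp: nn_integral_cmult_indicator)
  also have "\<dots> = (\<Sum>j\<in>J. ennreal (c j * (b j - a j)))"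
    using assms(2,3) by (auto simp: ennreal_mult intro!: sum.cong)
  also have "\<dots> = ennreal (\<Sum>j\<in>J. c j * (b j - a j))"
    using assms(2,3) by (intro sum_ennreal) auto
  finally show ?thesis .
qed

definition gap :: "(nat \<Rightarrow> real) \<Rightarrow> nat \<Rightarrow> real" where
  "gap z j = min 1 (z (Suc j) - z j)"

definition avg_cutoff :: "(nat \<Rightarrow> real) \<Rightarrow> nat \<Rightarrow> real \<Rightarrow> real" where
  "avg_cutoff z n x = (\<Sum>j\<in>{n+1..2*n+1}. cutoff (z j) (gap z j) x) / (real n + 1)"

lemma smooth_upto_avg_cutoff: "smooth_upto k (avg_cutoff z n)"
proof -
  have "smooth_upto k (\<lambda>x. (\<Sum>j\<in>{n+1..2*n+1}. cutoff (z j) (gap z j) x) * (1 / (real n + 1)))"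
    by (intro smooth_upto_mult smooth_upto_sum smooth_upto_cutoff smooth_upto_const)
  then show ?thesis by (simp add: avg_cutoff_def[abs_def])
qed

lemma avg_cutoff_nonneg: "0 \<le> avg_cutoff z n x"
  by (simp add: avg_cutoff_def sum_nonneg cutoff_nonneg)

lemma avg_cutoff_le_1: "avg_cutoff z n x \<le> 1"
proof -
  have "(\<Sum>j\<in>{n+1..2*n+1}. cutoff (z j) (gap z j) x) \<le> of_nat (card {n+1..2*n+1}) * 1"
    by (rule sum_bounded_above) (simp add: cutoff_le_1)
  then show ?thesis by (simp add: avg_cutoff_def)
qed

lemma deriv_avg_cutoff:
  "deriv (avg_cutoff z n) x
    = - (\<Sum>j\<in>{n+1..2*n+1}. deriv smooth_step ((x - z j) / gap z j) / gap z j) / (real n + 1)"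
proof (rule DERIV_imp_deriv)
  show "(avg_cutoff z n has_real_derivative
      - (\<Sum>j\<in>{n+1..2*n+1}. deriv smooth_step ((x - z j) / gap z j) / gap z j) / (real n + 1)) (at x)"
    unfolding avg_cutoff_def[abs_def]
    using smooth_upto_has_real_derivative[OF smooth_upto_cutoff[of 0], of _ _ x]
    by (auto intro!: derivative_eq_intros simp: deriv_cutoff sum_negf)
qed

context
  fixes z :: "nat \<Rightarrow> real"
  assumes z_mono: "strict_mono z"
begin

lemma gap_pos: "0 < gap z j"
  using strict_monoD[OF z_mono, of j "Suc j"] by (simp add: gap_def)

lemma gap_le: "z j + gap z j \<le> z (Suc j)"
  by (simp add: gap_def)

lemma incseq_avg_cutoff: "incseq (\<lambda>n. avg_cutoff z n x)"
proof -
  have "mono (\<lambda>j. cutoff (z j) (gap z j) x)"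
  proof (rule incseq_SucI)
    fix j
    show "cutoff (z j) (gap z j) x \<le> cutoff (z (Suc j)) (gap z (Suc j)) x"
    proof (cases "x \<le> z (Suc j)")
      case True
      then show ?thesis by (simp add: cutoff_eq_1 gap_pos cutoff_le_1)
    next
      case False
      then have "z j + gap z j \<le> x" using gap_le[of j] by linarith
      then show ?thesis by (simp add: cutoff_eq_0 gap_pos cutoff_nonneg)
    qed
  qed
  then show ?thesis unfolding avg_cutoff_def by (rule mono_window_average)
qed

lemma avg_cutoff_eq_1: "x \<le> z (n+1) \<Longrightarrow> avg_cutoff z n x = 1"
proof -
  assume x: "x \<le> z (n+1)"
  have "cutoff (z j) (gap z j) x = 1" if "j \<in> {n+1..2*n+1}" for j
    using that x strict_mono_leD[OF z_mono, of "n+1" j] by (intro cutoff_eq_1 gap_pos) auto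
  then show ?thesis by (simp add: avg_cutoff_def)
qed

lemma avg_cutoff_eq_0: "z (2*n+2) \<le> x \<Longrightarrow> avg_cutoff z n x = 0"
proof -
  assume x: "z (2*n+2) \<le> x"
  have "cutoff (z j) (gap z j) x = 0" if "j \<in> {n+1..2*n+1}" for j
    using that x gap_le[of j] strict_mono_leD[OF z_mono, of "Suc j" "2*n+2"]
    by (intro cutoff_eq_0 gap_pos) auto
  then show ?thesis by (simp add: avg_cutoff_def)
qed

lemma weighted_deriv_avg_cutoff_sq_le:
  assumes B: "\<And>t. \<bar>deriv smooth_step t\<bar> \<le> B"
    and w: "\<And>j. \<bar>x - z j\<bar> \<le> 1 \<Longrightarrow> w \<le> \<bar>x - z j\<bar>"
  shows "w * (deriv (avg_cutoff z n) x)\<^sup>2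
    \<le> (\<Sum>j\<in>{n+1..2*n+1}. B\<^sup>2 / ((real n + 1)\<^sup>2 * gap z j) * indicator {z j..z j + gap z j} x)"
proof -
  define a where "a j = deriv smooth_step ((x - z j) / gap z j) / gap z j" for j
  have a_nonzero: "z j < x \<and> x < z j + gap z j" if "a j \<noteq> 0" for j
    using that gap_pos[of j] by (intro deriv_smooth_step_nonzero_between) (auto simp: a_def)
  have a_disjoint: "a j * a k = 0" if "j < k" for j k
  proof (rule ccontr)
    assume "a j * a k \<noteq> 0"
    then have "x < z j + gap z j" "z k < x" using a_nonzero by auto
    moreover have "z (Suc j) \<le> z k" using that strict_mono_leD[OF z_mono, of "Suc j" k] by simp
    ultimately show False using gap_le[of j] by linarith
  qed
  have a_bound: "w * (a j)\<^sup>2 \<le> B\<^sup>2 / gap z j * indicator {z j..z j + gap z j} x" for j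
  proof (cases "a j = 0")
    case False
    then have x: "z j < x \<and> x < z j + gap z j" by (rule a_nonzero)
    have "\<bar>x - z j\<bar> \<le> gap z j" and "gap z j \<le> 1" using x by (auto simp: gap_def)
    then have "w \<le> gap z j" using w[of j] by linarith
    moreover have "(a j)\<^sup>2 \<le> B\<^sup>2 / (gap z j)\<^sup>2"
      using B[of "(x - z j) / gap z j"] gap_pos[of j]
      by (auto simp: a_def power_divide abs_le_square_iff[symmetric] intro!: divide_right_mono)
    ultimately have "w * (a j)\<^sup>2 \<le> gap z j * (B\<^sup>2 / (gap z j)\<^sup>2)"
      using gap_pos[of j] by (intro mult_mono) auto
    with x gap_pos[of j] show ?thesis by (simp add: power2_eq_square indicator_def)
  qed (simp add: indicator_def gap_pos less_imp_le)
  define J where "J = {n+1..2*n+1}"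
  have "deriv (avg_cutoff z n) x = - (\<Sum>j\<in>J. a j) / (real n + 1)"
    unfolding deriv_avg_cutoff a_def J_def ..
  moreover have "(\<Sum>j\<in>J. a j)\<^sup>2 = (\<Sum>j\<in>J. (a j)\<^sup>2)"
    by (rule power2_sum_eq_sum_power2) (metis a_disjoint linorder_neq_iff mult.commute)
  ultimately have "w * (deriv (avg_cutoff z n) x)\<^sup>2 = (\<Sum>j\<in>J. w * (a j)\<^sup>2) / (real n + 1)\<^sup>2"
    by (simp add: power_divide sum_distrib_left)
  also have "\<dots> \<le> (\<Sum>j\<in>J. B\<^sup>2 / gap z j * indicator {z j..z j + gap z j} x) / (real n + 1)\<^sup>2"
    by (intro divide_right_mono sum_mono a_bound) simp
  also have "\<dots> = (\<Sum>j\<in>J. B\<^sup>2 / ((real n + 1)\<^sup>2 * gap z j) * indicator {z j..z j + gap z j} x)"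
    by (simp add: sum_divide_distrib mult.commute)
  finally show ?thesis unfolding J_def .
qed

lemma nn_integral_weighted_deriv_avg_cutoff_sq_le:
  assumes B: "\<And>t. \<bar>deriv smooth_step t\<bar> \<le> B"
    and w: "\<And>x j. \<bar>x - z j\<bar> \<le> 1 \<Longrightarrow> w x \<le> \<bar>x - z j\<bar>"
  shows "(\<integral>\<^sup>+x. ennreal (w x * (deriv (avg_cutoff z n) x)\<^sup>2) \<partial>lborel) \<le> ennreal (B\<^sup>2 / (real n + 1))"
proof -
  define c where "c j = B\<^sup>2 / ((real n + 1)\<^sup>2 * gap z j)" for j
  have "(\<integral>\<^sup>+x. ennreal (w x * (deriv (avg_cutoff z n) x)\<^sup>2) \<partial>lborel)
      \<le> (\<integral>\<^sup>+x. ennreal (\<Sum>j\<in>{n+1..2*n+1}. c j * indicator {z j..z j + gap z j} x) \<partial>lborel)"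
    unfolding c_def using B w by (intro nn_integral_mono ennreal_leI weighted_deriv_avg_cutoff_sq_le)
  also have "\<dots> = ennreal (\<Sum>j\<in>{n+1..2*n+1}. c j * (z j + gap z j - z j))"
    using gap_pos by (intro nn_integral_sum_indicator_Icc) (auto simp: c_def less_imp_le)
  also have "(\<Sum>j\<in>{n+1..2*n+1}. c j * (z j + gap z j - z j)) = (\<Sum>j\<in>{n+1..2*n+1}. B\<^sup>2 / (real n + 1)\<^sup>2)"
    using gap_pos by (intro sum.cong) (auto simp: c_def less_imp_neq[symmetric])
  also have "\<dots> = B\<^sup>2 / (real n + 1)"
    by (simp add: power2_eq_square add.commute)
  finally show ?thesis .
qed

end

section \<open>Two-sided cutoffs\<close>

definition right_nodes :: "(int \<Rightarrow> real) \<Rightarrow> nat \<Rightarrow> real" where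
  "right_nodes xs j = xs (int j)"

definition mirrored_left_nodes :: "(int \<Rightarrow> real) \<Rightarrow> nat \<Rightarrow> real" where
  "mirrored_left_nodes xs j = - xs (- int j)"

definition two_sided_cutoff :: "(int \<Rightarrow> real) \<Rightarrow> nat \<Rightarrow> real \<Rightarrow> real" where
  "two_sided_cutoff xs n x =
     avg_cutoff (right_nodes xs) n x * avg_cutoff (mirrored_left_nodes xs) n (- x)"

lemma smooth_upto_two_sided_cutoff: "smooth_upto k (two_sided_cutoff xs n)"
proof -
  have "smooth_upto k (\<lambda>x. avg_cutoff (mirrored_left_nodes xs) n ((-1) * x + 0))"
    by (intro smooth_upto_compose_affine smooth_upto_avg_cutoff)
  then show ?thesis
    unfolding two_sided_cutoff_def[abs_def] by (intro smooth_upto_mult smooth_upto_avg_cutoff) simp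
qed

lemma two_sided_cutoff_nonneg: "0 \<le> two_sided_cutoff xs n x"
  by (simp add: two_sided_cutoff_def avg_cutoff_nonneg)

lemma two_sided_cutoff_le_1: "two_sided_cutoff xs n x \<le> 1"
  by (simp add: two_sided_cutoff_def avg_cutoff_nonneg avg_cutoff_le_1 mult_le_one)

lemma power2_add_scaled_le:
  fixes a b p q :: real
  assumes "\<bar>p\<bar> \<le> 1" and "\<bar>q\<bar> \<le> 1"
  shows "(a * p + b * q)\<^sup>2 \<le> 2 * a\<^sup>2 + 2 * b\<^sup>2"
proof -
  have "(a * p + b * q)\<^sup>2 \<le> 2 * (a * p)\<^sup>2 + 2 * (b * q)\<^sup>2"
    using sum_squares_ge_zero[of "a * p - b * q" 0] by (simp add: power2_eq_square algebra_simps)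
  moreover have "(a * p)\<^sup>2 \<le> a\<^sup>2" and "(b * q)\<^sup>2 \<le> b\<^sup>2"
    using assms by (simp_all add: power_mult_distrib mult_left_le abs_square_le_1)
  ultimately show ?thesis by linarith
qed

lemma deriv_two_sided_cutoff_sq_le:
  "(deriv (two_sided_cutoff xs n) x)\<^sup>2
    \<le> 2 * (deriv (avg_cutoff (right_nodes xs) n) x)\<^sup>2
      + 2 * (deriv (avg_cutoff (mirrored_left_nodes xs) n) (- x))\<^sup>2"
proof -
  let ?R = "avg_cutoff (right_nodes xs) n" and ?L = "avg_cutoff (mirrored_left_nodes xs) n"
  have "(?R has_real_derivative deriv ?R x) (at x)"
    by (rule smooth_upto_has_real_derivative[OF smooth_upto_avg_cutoff[of 0]])
  moreover have "((\<lambda>x. ?L ((-1) * x + 0)) has_real_derivative (-1) * deriv ?L ((-1) * x + 0)) (at x)"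
    by (intro has_real_derivative_compose_affine smooth_upto_has_real_derivative[OF smooth_upto_avg_cutoff])
  ultimately have "(two_sided_cutoff xs n has_real_derivative
      deriv ?R x * ?L (- x) + (- deriv ?L (- x)) * ?R x) (at x)"
    unfolding two_sided_cutoff_def[abs_def] by (auto dest: DERIV_mult)
  then have "deriv (two_sided_cutoff xs n) x = deriv ?R x * ?L (- x) + (- deriv ?L (- x)) * ?R x"
    by (rule DERIV_imp_deriv)
  then show ?thesis
    using power2_add_scaled_le[of "?L (- x)" "?R x" "deriv ?R x" "- deriv ?L (- x)"]
    by (simp add: avg_cutoff_nonneg avg_cutoff_le_1)
qed

lemma nn_integral_reflect_lborel:
  fixes f :: "real \<Rightarrow> ennreal"
  assumes "f \<in> borel_measurable borel"
  shows "(\<integral>\<^sup>+x. f (- x) \<partial>lborel) = (\<integral>\<^sup>+x. f x \<partial>lborel)"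
proof -
  have "(\<integral>\<^sup>+x. f x \<partial>lborel) = (\<integral>\<^sup>+x. f x \<partial>distr lborel borel uminus)"
    by (simp add: lborel_distr_uminus)
  also have "\<dots> = (\<integral>\<^sup>+x. f (- x) \<partial>lborel)"
    using assms by (intro nn_integral_distr) auto
  finally show ?thesis ..
qed

context
  fixes xs :: "int \<Rightarrow> real"
  assumes xs_mono: "strict_mono xs"
begin

lemma strict_mono_right_nodes: "strict_mono (right_nodes xs)"
  using xs_mono by (auto simp: strict_mono_def right_nodes_def)

lemma strict_mono_mirrored_left_nodes: "strict_mono (mirrored_left_nodes xs)"
  using xs_mono by (auto simp: strict_mono_def mirrored_left_nodes_def)

lemma incseq_two_sided_cutoff: "incseq (\<lambda>n. two_sided_cutoff xs n x)"
  unfolding two_sided_cutoff_def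
  using incseq_avg_cutoff[OF strict_mono_right_nodes] incseq_avg_cutoff[OF strict_mono_mirrored_left_nodes]
  by (auto simp: incseq_def intro!: mult_mono avg_cutoff_nonneg)

lemma two_sided_cutoff_eq_1:
  "xs (- int (n+1)) \<le> x \<Longrightarrow> x \<le> xs (int (n+1)) \<Longrightarrow> two_sided_cutoff xs n x = 1"
  by (simp add: two_sided_cutoff_def right_nodes_def mirrored_left_nodes_def
      avg_cutoff_eq_1[OF strict_mono_right_nodes] avg_cutoff_eq_1[OF strict_mono_mirrored_left_nodes])

lemma test_fun_two_sided_cutoff: "test_fun (two_sided_cutoff xs n)"
proof (rule test_funI[OF smooth_upto_two_sided_cutoff])
  have "two_sided_cutoff xs n x = 0" if "x \<notin> {xs (- int (2*n+2))..xs (int (2*n+2))}" for x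
    using that
    by (auto simp: two_sided_cutoff_def right_nodes_def mirrored_left_nodes_def
        avg_cutoff_eq_0[OF strict_mono_right_nodes] avg_cutoff_eq_0[OF strict_mono_mirrored_left_nodes])
  then show "bounded {x. two_sided_cutoff xs n x \<noteq> 0}"
    by (blast intro: bounded_subset[OF bounded_closed_interval])
qed

lemma nn_integral_weighted_deriv_reflected_cutoff_sq_le:
  assumes B: "\<And>t. \<bar>deriv smooth_step t\<bar> \<le> B"
    and w_measurable [measurable]: "w \<in> borel_measurable borel"
    and w_le: "\<And>x i. \<bar>x - xs i\<bar> \<le> 1 \<Longrightarrow> w x \<le> \<bar>x - xs i\<bar>"
  shows "(\<integral>\<^sup>+x. ennreal (w x * (deriv (avg_cutoff (mirrored_left_nodes xs) n) (- x))\<^sup>2) \<partial>lborel)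
    \<le> ennreal (B\<^sup>2 / (real n + 1))"
proof -
  have [measurable]: "deriv (avg_cutoff (mirrored_left_nodes xs) n) \<in> borel_measurable borel"
    by (intro borel_measurable_deriv_smooth_upto smooth_upto_avg_cutoff)
  have "(\<integral>\<^sup>+x. ennreal (w x * (deriv (avg_cutoff (mirrored_left_nodes xs) n) (- x))\<^sup>2) \<partial>lborel)
      = (\<integral>\<^sup>+x. ennreal (w (- x) * (deriv (avg_cutoff (mirrored_left_nodes xs) n) x)\<^sup>2) \<partial>lborel)"
    using nn_integral_reflect_lborel[of "\<lambda>x. ennreal (w (- x) * (deriv (avg_cutoff (mirrored_left_nodes xs) n) x)\<^sup>2)"]
    by simp
  also have "\<dots> \<le> ennreal (B\<^sup>2 / (real n + 1))"
  proof (rule nn_integral_weighted_deriv_avg_cutoff_sq_le[OF strict_mono_mirrored_left_nodes B])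
    fix y j
    have "\<bar>- y - xs (- int j)\<bar> = \<bar>y - mirrored_left_nodes xs j\<bar>"
      by (simp add: mirrored_left_nodes_def abs_if)
    then show "\<bar>y - mirrored_left_nodes xs j\<bar> \<le> 1 \<Longrightarrow> w (- y) \<le> \<bar>y - mirrored_left_nodes xs j\<bar>"
      using w_le[of "- y" "- int j"] by simp
  qed
  finally show ?thesis .
qed

lemma nn_integral_weighted_deriv_two_sided_cutoff_sq_le:
  assumes B: "\<And>t. \<bar>deriv smooth_step t\<bar> \<le> B"
    and w_measurable [measurable]: "w \<in> borel_measurable borel"
    and w_nonneg: "\<And>x. 0 \<le> w x"
    and w_le: "\<And>x i. \<bar>x - xs i\<bar> \<le> 1 \<Longrightarrow> w x \<le> \<bar>x - xs i\<bar>"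
  shows "(\<integral>\<^sup>+x. ennreal (w x * (deriv (two_sided_cutoff xs n) x)\<^sup>2) \<partial>lborel)
    \<le> ennreal (4 * B\<^sup>2 / (real n + 1))"
proof -
  define R' where "R' = deriv (avg_cutoff (right_nodes xs) n)"
  define L' where "L' = deriv (avg_cutoff (mirrored_left_nodes xs) n)"
  have [measurable]: "R' \<in> borel_measurable borel" "L' \<in> borel_measurable borel"
    unfolding R'_def L'_def by (intro borel_measurable_deriv_smooth_upto smooth_upto_avg_cutoff)+
  have "ennreal (w x * (deriv (two_sided_cutoff xs n) x)\<^sup>2)
      \<le> 2 * ennreal (w x * (R' x)\<^sup>2) + 2 * ennreal (w x * (L' (- x))\<^sup>2)" for x
  proof -
    have "w x * (deriv (two_sided_cutoff xs n) x)\<^sup>2 \<le> 2 * (w x * (R' x)\<^sup>2) + 2 * (w x * (L' (- x))\<^sup>2)"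
      using mult_left_mono[OF deriv_two_sided_cutoff_sq_le w_nonneg]
      by (simp add: R'_def L'_def algebra_simps)
    then have "ennreal (w x * (deriv (two_sided_cutoff xs n) x)\<^sup>2)
        \<le> ennreal (2 * (w x * (R' x)\<^sup>2) + 2 * (w x * (L' (- x))\<^sup>2))"
      by (rule ennreal_leI)
    also have "\<dots> = 2 * ennreal (w x * (R' x)\<^sup>2) + 2 * ennreal (w x * (L' (- x))\<^sup>2)"
      using w_nonneg[of x] by (simp add: ennreal_plus ennreal_mult)
    finally show ?thesis .
  qed
  then have "(\<integral>\<^sup>+x. ennreal (w x * (deriv (two_sided_cutoff xs n) x)\<^sup>2) \<partial>lborel)
      \<le> 2 * (\<integral>\<^sup>+x. ennreal (w x * (R' x)\<^sup>2) \<partial>lborel) + 2 * (\<integral>\<^sup>+x. ennreal (w x * (L' (- x))\<^sup>2) \<partial>lborel)"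
    by (simp add: nn_integral_mono flip: nn_integral_add nn_integral_cmult)
  also have "\<dots> \<le> 2 * ennreal (B\<^sup>2 / (real n + 1)) + 2 * ennreal (B\<^sup>2 / (real n + 1))"
    unfolding R'_def L'_def using w_le
    by (intro add_mono mult_left_mono nn_integral_weighted_deriv_reflected_cutoff_sq_le B
        nn_integral_weighted_deriv_avg_cutoff_sq_le[OF strict_mono_right_nodes]) (simp_all add: right_nodes_def)
  also have "\<dots> = ennreal (4 * B\<^sup>2 / (real n + 1))"
    using ennreal_mult[of 4 "B\<^sup>2 / (real n + 1)"] by (simp flip: distrib_right)
  finally show ?thesis .
qed

end

section \<open>Recurrence from test functions\<close>

lemma closure_energy_test_fun:
  assumes "sets M = sets borel" and "test_fun f"
  shows "closure_energy M f (preform M f f)"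
proof -
  have "continuous_on UNIV f"
    using assms(2) unfolding test_fun_def
    by (metis continuous_at_imp_continuous_on differentiable_imp_continuous_within funpow_0)
  then have "f \<in> borel_measurable M"
    using measurable_cong_sets[OF assms(1) refl] borel_measurable_continuous_onI by blast
  then show ?thesis
    unfolding closure_energy_def using assms(2)
    by (intro conjI exI[of _ "\<lambda>_. f"]) (simp_all add: preform_def)
qed

lemma recurrent_closureI:
  assumes "sets M = sets borel"
    and "\<And>n. test_fun (u n)" and "\<And>n x. 0 \<le> u n x" and "\<And>n x. u n x \<le> 1"
    and "\<And>x. incseq (\<lambda>n. u n x)" and "\<And>x. (\<lambda>n. u n x) \<longlonglongrightarrow> 1"
    and "(\<lambda>n. preform M (u n) (u n)) \<longlonglongrightarrow> 0"
  shows "recurrent_closure M"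
  unfolding recurrent_closure_def
  using assms closure_energy_test_fun[OF assms(1,2)]
  by (intro exI[of _ u] exI[of _ "\<lambda>n. preform M (u n) (u n)"]) auto

lemma preform_density_lborel:
  assumes [measurable]: "w \<in> borel_measurable borel" "deriv f \<in> borel_measurable borel"
    and "\<And>x. 0 \<le> w x"
  shows "preform (density lborel (\<lambda>x. ennreal (w x))) f f
    = enn2real (\<integral>\<^sup>+x. ennreal (w x * (deriv f x)\<^sup>2) \<partial>lborel) / 2"
proof -
  have "(\<integral>x. deriv f x * deriv f x \<partial>density lborel (\<lambda>x. ennreal (w x)))
      = enn2real (\<integral>\<^sup>+x. ennreal (deriv f x * deriv f x) \<partial>density lborel (\<lambda>x. ennreal (w x)))"
    by (rule integral_eq_nn_integral) auto
  also have "(\<integral>\<^sup>+x. ennreal (deriv f x * deriv f x) \<partial>density lborel (\<lambda>x. ennreal (w x)))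
      = (\<integral>\<^sup>+x. ennreal (w x * (deriv f x)\<^sup>2) \<partial>lborel)"
    using assms(3)
    by (subst nn_integral_density) (auto intro!: nn_integral_cong simp: ennreal_mult[symmetric] power2_eq_square)
  finally show ?thesis by (simp add: preform_def)
qed

section \<open>The weight\<close>

locale isolated_nodes =
  fixes xs :: "int \<Rightarrow> real"
  assumes xs_less_Suc: "\<And>i. xs i < xs (i + 1)"
    and not_islimpt_nodes: "\<And>c. \<not> c islimpt range xs"
begin

lemma strict_mono_nodes: "strict_mono xs"
proof (rule strict_monoI)
  fix i j :: int
  assume "i < j"
  then show "xs i < xs j"
    by (induction j rule: int_gr_induct) (use xs_less_Suc less_trans in blast)+
qed

lemma finite_nodes_Icc: "finite ({a..b} \<inter> range xs)"
  by (rule finite_not_islimpt_in_compact) (auto simp: not_islimpt_nodes)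

lemma ex_node_greater: "\<exists>i. b < xs i"
proof (rule ccontr)
  assume "\<nexists>i. b < xs i"
  then have "xs ` {0..} \<subseteq> {xs 0..b} \<inter> range xs"
    using strict_mono_nodes by (auto simp: not_less strict_mono_less_eq)
  then have "finite (xs ` {0..})" by (rule finite_subset) (rule finite_nodes_Icc)
  with strict_mono_imp_inj_on[OF strict_mono_nodes] show False
    by (simp add: finite_image_iff infinite_Ici inj_on_subset)
qed

lemma ex_node_less: "\<exists>i. xs i < b"
proof (rule ccontr)
  assume "\<nexists>i. xs i < b"
  then have "xs ` {..0} \<subseteq> {b..xs 0} \<inter> range xs"
    using strict_mono_nodes by (auto simp: not_less strict_mono_less_eq)
  then have "finite (xs ` {..0})" by (rule finite_subset) (rule finite_nodes_Icc)
  with strict_mono_imp_inj_on[OF strict_mono_nodes] show False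
    by (simp add: finite_image_iff infinite_Iic inj_on_subset)
qed

lemma ex_cell: "\<exists>i. (xs (i - 1) + xs i) / 2 \<le> t \<and> t \<le> (xs i + xs (i + 1)) / 2"
proof -
  obtain i0 where i0: "xs i0 < t" using ex_node_less by blast
  obtain j where j: "t < xs j" using ex_node_greater by blast
  define S where "S = {i. i0 \<le> i \<and> xs i \<le> t}"
  have "S \<subseteq> {i0..j}"
    using j strict_mono_nodes by (auto simp: S_def strict_mono_less_eq[symmetric])
  then have S: "finite S" by (rule finite_subset) simp
  moreover have "i0 \<in> S" using i0 by (simp add: S_def)
  ultimately have "Max S \<in> S" by (intro Max_in) auto
  moreover have "Max S + 1 \<notin> S" using Max_ge[OF S, of "Max S + 1"] by auto
  ultimately have "xs (Max S) \<le> t" "t < xs (Max S + 1)" by (auto simp: S_def)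
  moreover have "xs (Max S - 1) < xs (Max S)" "xs (Max S + 1) < xs (Max S + 1 + 1)"
    using xs_less_Suc[of "Max S - 1"] xs_less_Suc[of "Max S + 1"] by simp_all
  ultimately show ?thesis
    by (cases "t \<le> (xs (Max S) + xs (Max S + 1)) / 2")
       (auto intro: exI[of _ "Max S"] exI[of _ "Max S + 1"])
qed

lemma cell_nearest_node:
  assumes "(xs (i - 1) + xs i) / 2 \<le> t" and "t \<le> (xs i + xs (i + 1)) / 2"
  shows "\<bar>t - xs i\<bar> \<le> \<bar>t - xs j\<bar>"
proof -
  consider "i + 1 \<le> j" | "j = i" | "j \<le> i - 1" by linarith
  then show ?thesis
  proof cases
    case 1
    then have "xs (i + 1) \<le> xs j" by (simp add: strict_mono_less_eq[OF strict_mono_nodes])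
    with assms xs_less_Suc[of i] show ?thesis by (simp add: abs_if)
  next
    case 3
    then have "xs j \<le> xs (i - 1)" by (simp add: strict_mono_less_eq[OF strict_mono_nodes])
    with assms xs_less_Suc[of "i - 1"] show ?thesis by (simp add: abs_if)
  qed simp
qed

text \<open>Whichever cell \<open>SOME\<close> picks in the definition of \<open>weight\<close>, its node is a nearest node.\<close>
lemma weight_eq_infdist: "weight xs \<alpha> t = infdist t (range xs) powr \<alpha>"
proof -
  define i where "i = (SOME i. (xs (i - 1) + xs i) / 2 \<le> t \<and> t \<le> (xs i + xs (i + 1)) / 2)"
  have i: "(xs (i - 1) + xs i) / 2 \<le> t" "t \<le> (xs i + xs (i + 1)) / 2"
    unfolding i_def by (metis (mono_tags, lifting) someI_ex[OF ex_cell])+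
  have "infdist t (range xs) = \<bar>t - xs i\<bar>"
  proof (rule antisym)
    show "infdist t (range xs) \<le> \<bar>t - xs i\<bar>"
      using infdist_le[of "xs i" "range xs" t] by (simp add: dist_real_def)
    show "\<bar>t - xs i\<bar> \<le> infdist t (range xs)"
      unfolding infdist_def using cell_nearest_node[OF i]
      by (auto intro!: cINF_greatest simp: dist_real_def)
  qed
  then show ?thesis by (simp add: weight_def i_def)
qed

lemma borel_measurable_weight: "weight xs \<alpha> \<in> borel_measurable borel"
proof -
  have "(\<lambda>t. infdist t (range xs)) \<in> borel_measurable borel"
    by (intro borel_measurable_continuous_onI continuous_intros)
  then show ?thesis unfolding weight_eq_infdist[abs_def] by measurable
qed

lemma weight_nonneg: "0 \<le> weight xs \<alpha> t"
  by (simp add: weight_def)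

lemma two_sided_cutoff_tendsto_1: "(\<lambda>n. two_sided_cutoff xs n x) \<longlonglongrightarrow> 1"
proof -
  obtain i j where ij: "x < xs i" "xs j < x" using ex_node_greater ex_node_less by blast
  have "two_sided_cutoff xs n x = 1" if "nat i + nat (- j) \<le> n" for n
  proof (rule two_sided_cutoff_eq_1[OF strict_mono_nodes])
    have "xs (- int (n + 1)) \<le> xs j" and "xs i \<le> xs (int (n + 1))"
      using that by (simp_all add: strict_mono_less_eq[OF strict_mono_nodes])
    with ij show "xs (- int (n + 1)) \<le> x" and "x \<le> xs (int (n + 1))" by simp_all
  qed
  then show ?thesis
    by (intro tendsto_eventually) (auto simp: eventually_sequentially)
qed

lemma weight_le_dist_node:
  assumes "1 \<le> \<alpha>" and "\<bar>t - xs i\<bar> \<le> 1"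
  shows "weight xs \<alpha> t \<le> \<bar>t - xs i\<bar>"
proof -
  have "weight xs \<alpha> t \<le> \<bar>t - xs i\<bar> powr \<alpha>"
    unfolding weight_eq_infdist using infdist_le[of "xs i" "range xs" t] assms(1)
    by (intro powr_mono2) (auto simp: dist_real_def infdist_nonneg)
  also have "\<dots> \<le> \<bar>t - xs i\<bar> powr 1"
    using assms by (intro powr_mono') auto
  finally show ?thesis by simp
qed

lemma preform_wmeasure_two_sided_cutoff_bounds:
  fixes n :: nat and \<alpha> B :: real
  assumes "1 \<le> \<alpha>" and B: "\<And>t. \<bar>deriv smooth_step t\<bar> \<le> B"
  defines "e \<equiv> preform (wmeasure xs \<alpha>) (two_sided_cutoff xs n) (two_sided_cutoff xs n)"
  shows "0 \<le> e \<and> e \<le> 2 * B\<^sup>2 / (real n + 1)"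
proof -
  define I where "I = (\<integral>\<^sup>+x. ennreal (weight xs \<alpha> x * (deriv (two_sided_cutoff xs n) x)\<^sup>2) \<partial>lborel)"
  have "I \<le> ennreal (4 * B\<^sup>2 / (real n + 1))"
    unfolding I_def using weight_le_dist_node[OF assms(1)]
    by (intro nn_integral_weighted_deriv_two_sided_cutoff_sq_le strict_mono_nodes B
        borel_measurable_weight weight_nonneg)
  then have "enn2real I \<le> 4 * B\<^sup>2 / (real n + 1)"
    by (intro enn2real_leI) simp_all
  moreover have "e = enn2real I / 2"
    unfolding e_def I_def wmeasure_def
    by (intro preform_density_lborel borel_measurable_weight weight_nonneg
        borel_measurable_deriv_smooth_upto smooth_upto_two_sided_cutoff)
  ultimately show ?thesis using enn2real_nonneg[of I] by linarith
qed

end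

theorem mainTheorem2:
  fixes xs :: "int \<Rightarrow> real" and \<alpha> :: real
  assumes "\<And>i. xs i < xs (i + 1)"
    and "\<And>c. \<not> c islimpt range xs"
    and "\<alpha> \<ge> 1"
  shows "recurrent_closure (wmeasure xs \<alpha>)"
proof -
  interpret isolated_nodes xs using assms(1,2) by unfold_locales
  obtain B where B: "\<And>t. \<bar>deriv smooth_step t\<bar> \<le> B" using bounded_deriv_smooth_step by blast
  define e where "e n = preform (wmeasure xs \<alpha>) (two_sided_cutoff xs n) (two_sided_cutoff xs n)" for n
  have "0 \<le> e n \<and> e n \<le> 2 * B\<^sup>2 / (real n + 1)" for n
    unfolding e_def using assms(3) B by (rule preform_wmeasure_two_sided_cutoff_bounds)
  moreover have "(\<lambda>n. 2 * B\<^sup>2 / (real n + 1)) \<longlonglongrightarrow> 0"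
    using LIMSEQ_Suc[OF lim_const_over_n[of "2 * B\<^sup>2"]] by (simp add: add.commute)
  ultimately have "e \<longlonglongrightarrow> 0"
    by (intro real_tendsto_sandwich[of "\<lambda>n. 0" e _ "\<lambda>n. 2 * B\<^sup>2 / (real n + 1)"]) auto
  then show ?thesis
    unfolding wmeasure_def e_def
    by (intro recurrent_closureI)
       (simp_all add: test_fun_two_sided_cutoff strict_mono_nodes two_sided_cutoff_nonneg
        two_sided_cutoff_le_1 incseq_two_sided_cutoff two_sided_cutoff_tendsto_1)
qed

end
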